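(* Let $\pi$ be a probability measure on $\Omega_X\times\mathbb{R}$, let $\mu:\Omega_X\to\mathbb{R}$ be a fixed measurable predictor, and let $(X_1,Y_1),\dots,(X_{N+1},Y_{N+1})$ be i.i.d. with law $\pi$ and independent of $\mu$. Let $J=\{1,\dots,N+1\}$ and $s_k=|\mu(X_k)-Y_k|$. For each ordered pair $i\neq j$ in $J$ let $K_{ij}:\Omega_X\times\Omega_X\to[0,\infty)$ be a kernel of the form $K_{ij}=\Phi\big(\{(X_l,Y_l):l\in J\setminus\{i,j\}\}\big)$ for a fixed measurable map $\Phi$ of the (unordered) multiset of the remaining data points (in particular, $K_{ij}=K$ a fixed kernel is allowed). Define $$p_{ik;j}=\frac{K_{ij}(X_i,X_k)}{\sum_{l\in J\setminus\{i,j\}}K_{ij}(X_i,X_l)},\qquad \hat{\bar s}_{ij}=\sum_{k\in J\setminus\{i,j\}}p_{ik;j}\,s_k,\qquad s^+_{ij}=\frac{|\mu(X_i)-Y_i|}{\hat{\bar s}_{ij}},$$ assuming all denominators and all $\hat{\bar s}_{ij}$ are positive, and set $s^+_i=s^+_{i(N+1)}$ for $i=1,\dots,N$. For $\alpha\in[0,1]$ let $Q$ be the $\lceil(1-\alpha)(N+1)\rceil$-th smallest value among $\{\hat{\bar s}_{(N+1)i}\,s^+_i\}_{i=1}^N$ (with $Q=+\infty$ if $\lceil(1-\alpha)(N+1)\rceil>N$), and define $C^{+\alpha}_{N+1}=[\mu(X_{N+1})-Q,\ \mu(X_{N+1})+Q]$. Then, with probability taken jointly over all $N+1$ data points, $$\mathbb{P}\big(Y_{N+1}\in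 C^{+\alpha}_{N+1}\big)\ge 1-2\alpha.$$
   Context: Jackknife+ rescaled-score conformal regression: $(X_i,Y_i)_{i\le N}$ is the calibration set and $(X_{N+1},Y_{N+1})$ the test point; note $\hat{\bar s}_{(N+1)i}$ and $s^+_i$ only use calibration labels, so $C^{+\alpha}_{N+1}$ is computable without $Y_{N+1}$. *)

theory Defs
  imports "HOL-Probability.Probability" "HOL-Library.Multiset"
begin

text \<open>Data: \<open>\<omega> k = (X_k, Y_k)\<close> for \<open>k \<in> J = {1..N+1}\<close>.\<close>

definition Jset :: "nat \<Rightarrow> nat set" where
  "Jset N = {1..N+1}"

definition score :: "('x \<Rightarrow> real) \<Rightarrow> (nat \<Rightarrow> 'x \<times> real) \<Rightarrow> nat \<Rightarrow> real" where
  "score \<mu> \<omega> k = \<bar>\<mu> (fst (\<omega> k)) - snd (\<omega> k)\<bar>"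

definition Kij :: "nat \<Rightarrow> (('x \<times> real) multiset \<Rightarrow> 'x \<Rightarrow> 'x \<Rightarrow> real)
    \<Rightarrow> (nat \<Rightarrow> 'x \<times> real) \<Rightarrow> nat \<Rightarrow> nat \<Rightarrow> 'x \<Rightarrow> 'x \<Rightarrow> real" where
  "Kij N \<Phi> \<omega> i j = \<Phi> (image_mset \<omega> (mset_set (Jset N - {i, j})))"

definition pw :: "nat \<Rightarrow> (('x \<times> real) multiset \<Rightarrow> 'x \<Rightarrow> 'x \<Rightarrow> real)
    \<Rightarrow> (nat \<Rightarrow> 'x \<times> real) \<Rightarrow> nat \<Rightarrow> nat \<Rightarrow> nat \<Rightarrow> real" where
  "pw N \<Phi> \<omega> i k j =
     Kij N \<Phi> \<omega> i j (fst (\<omega> i)) (fst (\<omega> k)) /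
     (\<Sum>l\<in>Jset N - {i, j}. Kij N \<Phi> \<omega> i j (fst (\<omega> i)) (fst (\<omega> l)))"

definition shat :: "nat \<Rightarrow> ('x \<Rightarrow> real) \<Rightarrow> (('x \<times> real) multiset \<Rightarrow> 'x \<Rightarrow> 'x \<Rightarrow> real)
    \<Rightarrow> (nat \<Rightarrow> 'x \<times> real) \<Rightarrow> nat \<Rightarrow> nat \<Rightarrow> real" where
  "shat N \<mu> \<Phi> \<omega> i j = (\<Sum>k\<in>Jset N - {i, j}. pw N \<Phi> \<omega> i k j * score \<mu> \<omega> k)"

definition splus :: "nat \<Rightarrow> ('x \<Rightarrow> real) \<Rightarrow> (('x \<times> real) multiset \<Rightarrow> 'x \<Rightarrow> 'x \<Rightarrow> real)
    \<Rightarrow> (nat \<Rightarrow> 'x \<times> real) \<Rightarrow> nat \<Rightarrow> nat \<Rightarrow> real" where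
  "splus N \<mu> \<Phi> \<omega> i j = \<bar>\<mu> (fst (\<omega> i)) - snd (\<omega> i)\<bar> / shat N \<mu> \<Phi> \<omega> i j"

text \<open>The \<open>k\<close>-th smallest (\<open>k \<ge> 1\<close>) of a finite list of reals, with value \<open>+\<infinity>\<close>
  if \<open>k\<close> exceeds the length. (For \<open>k = 0\<close>, which only occurs for \<open>\<alpha> = 1\<close> where
  the claim is trivial, this yields the smallest value.)\<close>
definition kth_smallest :: "nat \<Rightarrow> real list \<Rightarrow> ereal" where
  "kth_smallest k xs = (if k > length xs then \<infinity> else ereal (sort xs ! (k - 1)))"

definition Qval :: "nat \<Rightarrow> real \<Rightarrow> ('x \<Rightarrow> real) \<Rightarrow> (('x \<times> real) multiset \<Rightarrow> 'x \<Rightarrow> 'x \<Rightarrow> real)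
    \<Rightarrow> (nat \<Rightarrow> 'x \<times> real) \<Rightarrow> ereal" where
  "Qval N \<alpha> \<mu> \<Phi> \<omega> =
     kth_smallest (nat \<lceil>(1 - \<alpha>) * real (N + 1)\<rceil>)
       (map (\<lambda>i. shat N \<mu> \<Phi> \<omega> (N + 1) i * splus N \<mu> \<Phi> \<omega> i (N + 1)) [1..<N + 1])"

definition Cplus :: "nat \<Rightarrow> real \<Rightarrow> ('x \<Rightarrow> real) \<Rightarrow> (('x \<times> real) multiset \<Rightarrow> 'x \<Rightarrow> 'x \<Rightarrow> real)
    \<Rightarrow> (nat \<Rightarrow> 'x \<times> real) \<Rightarrow> real set" where
  "Cplus N \<alpha> \<mu> \<Phi> \<omega> =
     {y. ereal (\<mu> (fst (\<omega> (N + 1)))) - Qval N \<alpha> \<mu> \<Phi> \<omega> \<le> ereal y \<and>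
         ereal y \<le> ereal (\<mu> (fst (\<omega> (N + 1)))) + Qval N \<alpha> \<mu> \<Phi> \<omega>}"

end

theory Submission
  imports Defs
begin

(* Say that j beats i when s+_ij < s+_ji. Dividing by shat_(N+1)i > 0 shows that the test
   label falls outside C+ exactly when the test point N+1 beats at least
   k = ceil((1 - alpha)(N + 1)) calibration points. The scores s+_ij are equivariant under
   relabelling the data, and i.i.d. data are exchangeable, so every j in J beats k points with
   the same probability. On the other hand, fewer than 2 alpha (N + 1) points can beat k points
   at once: among themselves they win at most half of their mutual comparisons, so each of them
   must win many comparisons against the others. Averaging over j bounds the probability
   by 2 alpha. *)

lemma sets_Collect_le_card:
  assumes "finite I" and "\<And>i. i \<in> I \<Longrightarrow> {\<omega>\<in>space M. Q i \<omega>} \<in> sets M"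
  shows "{\<omega>\<in>space M. k \<le> card {i\<in>I. Q i \<omega>}} \<in> sets M"
proof -
  have "card {i\<in>I. Q i \<omega>} = (\<Sum>i\<in>I. if Q i \<omega> then 1 else 0)" for \<omega>
    using sum.inter_filter[OF assms(1), of "\<lambda>_. 1::nat"] by simp
  moreover have "(\<lambda>\<omega>. \<Sum>i\<in>I. if Q i \<omega> then 1 else 0 :: nat) \<in> measurable M (count_space UNIV)"
    using assms by measurable
  ultimately show ?thesis by simp
qed

lemma sorted_nth_less_iff:
  fixes ys :: "'a :: linorder list"
  assumes "sorted ys" "n < length ys"
  shows "ys ! n < s \<longleftrightarrow> n < length (filter (\<lambda>v. v < s) ys)"
  using assms
proof (induction ys arbitrary: n)
  case (Cons y ys)
  show ?case
  proof (cases "y < s")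
    case False
    then have none: "\<forall>v\<in>set (y # ys). \<not> v < s" using Cons.prems(1) by auto
    then have "filter (\<lambda>v. v < s) (y # ys) = []" by (simp only: filter_empty_conv)
    moreover have "\<not> (y # ys) ! n < s" using none nth_mem[OF Cons.prems(2)] by blast
    ultimately show ?thesis by (simp del: filter.simps)
  next
    case True
    then show ?thesis using Cons by (cases n) auto
  qed
qed simp

lemma ereal_le_kth_smallest_iff:
  assumes "1 \<le> k"
  shows "ereal s \<le> kth_smallest k xs \<longleftrightarrow> length (filter (\<lambda>v. v < s) xs) < k"
proof (cases "k \<le> length xs")
  case True
  have "length (filter (\<lambda>v. v < s) (sort xs)) = length (filter (\<lambda>v. v < s) xs)"
    by (metis mset_filter mset_sort size_mset)
  moreover have "k - 1 < length (sort xs)" using True assms by simp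
  ultimately show ?thesis
    using sorted_nth_less_iff[of "sort xs" "k - 1" s] True assms
    by (auto simp: kth_smallest_def not_less)
next
  case False
  moreover have "length (filter (\<lambda>v. v < s) xs) < k"
    using False length_filter_le[of "\<lambda>v. v < s" xs] by linarith
  ultimately show ?thesis by (simp add: kth_smallest_def)
qed

lemma ereal_interval_iff_abs_le:
  "ereal c - Q \<le> ereal y \<and> ereal y \<le> ereal c + Q \<longleftrightarrow> ereal \<bar>c - y\<bar> \<le> Q"
  by (cases Q) auto

lemma card_asym_pairs_le:
  assumes "finite A" and asym: "\<And>i j. W i j \<Longrightarrow> \<not> W j i"
  shows "2 * card {(i, j) \<in> A \<times> A. W i j} \<le> card A * card A - card A"
proof -
  let ?P = "{(i, j) \<in> A \<times> A. W i j}"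
  have irrefl: "\<not> W i i" for i using asym by blast
  have "finite ?P" using assms(1) by (auto intro: finite_subset[of _ "A \<times> A"])
  moreover have "?P \<inter> prod.swap ` ?P = {}" using asym by auto
  moreover have "card (prod.swap ` ?P) = card ?P" by (rule card_image) (simp add: inj_on_def)
  ultimately have "2 * card ?P = card (?P \<union> prod.swap ` ?P)"
    by (simp add: card_Un_disjoint)
  also have "\<dots> \<le> card (A \<times> A - (\<lambda>i. (i, i)) ` A)"
    using irrefl by (intro card_mono) (auto simp: assms(1))
  also have "\<dots> = card A * card A - card A"
    using assms(1) by (subst card_Diff_subset) (auto simp: card_image inj_on_def card_cartesian_product)
  finally show ?thesis .
qed

text \<open>The players with at least \<open>k\<close> wins win at most half of the games among themselves.\<close>
lemma card_many_wins_le: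
  fixes k :: nat
  assumes fin: "finite J" and asym: "\<And>i j. W i j \<Longrightarrow> \<not> W j i"
    and ne: "{j\<in>J. k \<le> card {i\<in>J. W j i}} \<noteq> {}"
  shows "2 * k + card {j\<in>J. k \<le> card {i\<in>J. W j i}} + 1 \<le> 2 * card J"
proof -
  define A where "A = {j\<in>J. k \<le> card {i\<in>J. W j i}}"
  define a where "a = card A"
  have AJ: "A \<subseteq> J" and finA: "finite A" using fin by (auto simp: A_def intro: finite_subset)
  have a_pos: "0 < a" using ne finA by (simp add: a_def A_def card_gt_0_iff)
  have a_le: "a \<le> card J" using fin AJ by (simp add: a_def card_mono)
  have "a * k \<le> (\<Sum>j\<in>A. card {i\<in>J. W j i})"
    using sum_mono[of A "\<lambda>_. k"] by (simp add: a_def A_def)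
  also have "\<dots> = card (SIGMA j:A. {i\<in>J. W j i})"
    using finA fin by (simp add: card_SigmaI)
  also have "\<dots> = card {(j, i) \<in> A \<times> J. W j i}" by (rule arg_cong[where f = card]) auto
  also have "\<dots> \<le> card {(j, i) \<in> A \<times> A. W j i} + card (A \<times> (J - A))"
  proof -
    have "{(j, i) \<in> A \<times> J. W j i} \<subseteq> {(j, i) \<in> A \<times> A. W j i} \<union> A \<times> (J - A)" by auto
    moreover have "finite {(j, i) \<in> A \<times> A. W j i}"
      by (rule finite_subset[of _ "A \<times> A"]) (auto simp: finA)
    ultimately have "card {(j, i) \<in> A \<times> J. W j i} \<le> card ({(j, i) \<in> A \<times> A. W j i} \<union> A \<times> (J - A))"
      using finA fin by (intro card_mono) auto
    then show ?thesis using card_Un_le order_trans by blast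
  qed
  finally have "a * k \<le> card {(j, i) \<in> A \<times> A. W j i} + card (A \<times> (J - A))" .
  moreover have "2 * card {(j, i) \<in> A \<times> A. W j i} \<le> a * a - a"
    using card_asym_pairs_le[of A W, OF finA asym] by (simp add: a_def)
  moreover have "card (A \<times> (J - A)) = a * (card J - a)"
    using finA fin AJ by (simp add: a_def card_cartesian_product card_Diff_subset)
  ultimately have "2 * (a * k) \<le> (a * a - a) + 2 * (a * (card J - a))" by linarith
  then have "a * (2 * k) \<le> a * ((a - 1) + 2 * (card J - a))"
    by (simp add: algebra_simps diff_mult_distrib2)
  then have "2 * k \<le> (a - 1) + 2 * (card J - a)" using a_pos by simp
  then show ?thesis using a_pos a_le unfolding a_def A_def by linarith
qed

lemma (in prob_space) sum_prob_le_of_card_le: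
  assumes "finite J" and events: "\<And>j. j \<in> J \<Longrightarrow> S j \<in> events"
    and bound: "\<And>\<omega>. \<omega> \<in> space M \<Longrightarrow> real (card {j\<in>J. \<omega> \<in> S j}) \<le> c"
  shows "(\<Sum>j\<in>J. prob (S j)) \<le> c"
proof -
  have integrable: "integrable M (indicator (S j) :: _ \<Rightarrow> real)" if "j \<in> J" for j
    by (rule integrable_real_indicator[OF events[OF that]]) (simp add: less_top[symmetric])
  have "(\<Sum>j\<in>J. prob (S j)) = (\<Sum>j\<in>J. expectation (indicator (S j)))"
    using events by (intro sum.cong) (auto simp: Int_absorb1 sets.sets_into_space)
  also have "\<dots> = expectation (\<lambda>\<omega>. \<Sum>j\<in>J. indicator (S j) \<omega>)"
    using integrable by (rule Bochner_Integration.integral_sum[symmetric])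
  also have "\<dots> \<le> c"
  proof (rule integral_le_const)
    show "integrable M (\<lambda>\<omega>. \<Sum>j\<in>J. indicator (S j) \<omega> :: real)"
      using integrable by (rule Bochner_Integration.integrable_sum)
    have "(\<Sum>j\<in>J. indicator (S j) \<omega> :: real) = real (card {j\<in>J. \<omega> \<in> S j})" for \<omega>
      using sum.inter_filter[OF assms(1), of "\<lambda>_. 1::real" "\<lambda>j. \<omega> \<in> S j"]
      by (simp add: indicator_def of_bool_def)
    then show "AE \<omega> in M. (\<Sum>j\<in>J. indicator (S j) \<omega> :: real) \<le> c"
      using bound by simp
  qed
  finally show ?thesis .
qed

lemma measure_PiM_permute_vimage:
  assumes "prob_space M" and "bij_betw \<tau> I I" and "A \<in> sets (PiM I (\<lambda>_. M))"
  shows "measure (PiM I (\<lambda>_. M)) ((\<lambda>\<omega>. \<lambda>n\<in>I. \<omega> (\<tau> n)) -` A \<inter> space (PiM I (\<lambda>_. M)))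
    = measure (PiM I (\<lambda>_. M)) A"
proof -
  have \<tau>: "\<tau> \<in> I \<rightarrow> I" using bij_betwE[OF assms(2)] by blast
  then have "(\<lambda>\<omega>. \<lambda>n\<in>I. \<omega> (\<tau> n)) \<in> measurable (PiM I (\<lambda>_. M)) (PiM I (\<lambda>_. M))"
    by (intro measurable_restrict measurable_component_singleton) auto
  moreover have "distr (PiM I (\<lambda>_. M)) (PiM I (\<lambda>_. M)) (\<lambda>\<omega>. \<lambda>n\<in>I. \<omega> (\<tau> n)) = PiM I (\<lambda>_. M)"
    using distr_PiM_reindex[of I "\<lambda>_. M" \<tau> I] assms(1,2) \<tau> by (simp add: bij_betw_def)
  ultimately show ?thesis using assms(3) by (metis measure_distr)
qed

lemma bij_betw_Diff_pair:
  assumes "bij_betw \<tau> J J" "a \<in> J" "b \<in> J"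
  shows "bij_betw \<tau> (J - {a, b}) (J - {\<tau> a, \<tau> b})"
proof (rule bij_betw_DiffI[OF assms(1)])
  show "bij_betw \<tau> {a, b} {\<tau> a, \<tau> b}"
    using assms by (intro bij_betw_subset[OF assms(1)]) auto
qed (use assms bij_betwE in auto)

lemma card_Jset: "card (Jset N) = N + 1"
  by (simp add: Jset_def)

definition pairwise_wins :: "nat \<Rightarrow> ('x \<Rightarrow> real) \<Rightarrow> (('x \<times> real) multiset \<Rightarrow> 'x \<Rightarrow> 'x \<Rightarrow> real)
    \<Rightarrow> (nat \<Rightarrow> 'x \<times> real) \<Rightarrow> nat \<Rightarrow> nat" where
  "pairwise_wins N \<mu> \<Phi> \<omega> j = card {i\<in>Jset N. splus N \<mu> \<Phi> \<omega> i j < splus N \<mu> \<Phi> \<omega> j i}"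

context
  fixes \<tau> :: "nat \<Rightarrow> nat" and N :: nat and \<omega> \<omega>' :: "nat \<Rightarrow> 'x \<times> real"
  assumes \<tau>: "bij_betw \<tau> (Jset N) (Jset N)" and \<omega>': "\<And>n. n \<in> Jset N \<Longrightarrow> \<omega>' n = \<omega> (\<tau> n)"
begin

lemma Kij_permute:
  assumes "a \<in> Jset N" "b \<in> Jset N"
  shows "Kij N \<Phi> \<omega>' a b = Kij N \<Phi> \<omega> (\<tau> a) (\<tau> b)"
proof -
  have "finite (Jset N - {a, b})" by (simp add: Jset_def)
  then have "image_mset \<omega>' (mset_set (Jset N - {a, b})) = image_mset (\<omega> \<circ> \<tau>) (mset_set (Jset N - {a, b}))"
    using \<omega>' by (intro image_mset_cong) auto
  also have "\<dots> = image_mset \<omega> (image_mset \<tau> (mset_set (Jset N - {a, b})))"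
    by (simp add: multiset.map_comp)
  also have "image_mset \<tau> (mset_set (Jset N - {a, b})) = mset_set (Jset N - {\<tau> a, \<tau> b})"
    using bij_betw_Diff_pair[OF \<tau> assms] by (auto simp: bij_betw_def image_mset_mset_set)
  finally show ?thesis unfolding Kij_def by simp
qed

lemma pw_permute:
  assumes "a \<in> Jset N" "b \<in> Jset N" "k \<in> Jset N"
  shows "pw N \<Phi> \<omega>' a k b = pw N \<Phi> \<omega> (\<tau> a) (\<tau> k) (\<tau> b)"
proof -
  have "(\<Sum>l\<in>Jset N - {a, b}. Kij N \<Phi> \<omega>' a b (fst (\<omega>' a)) (fst (\<omega>' l)))
      = (\<Sum>l\<in>Jset N - {a, b}. Kij N \<Phi> \<omega> (\<tau> a) (\<tau> b) (fst (\<omega> (\<tau> a))) (fst (\<omega> (\<tau> l))))"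
    using \<omega>' assms Kij_permute by (intro sum.cong) auto
  also have "\<dots> = (\<Sum>l\<in>Jset N - {\<tau> a, \<tau> b}. Kij N \<Phi> \<omega> (\<tau> a) (\<tau> b) (fst (\<omega> (\<tau> a))) (fst (\<omega> l)))"
    by (rule sum.reindex_bij_betw[OF bij_betw_Diff_pair[OF \<tau> assms(1,2)]])
  finally show ?thesis unfolding pw_def using Kij_permute \<omega>' assms by simp
qed

lemma shat_permute:
  assumes "a \<in> Jset N" "b \<in> Jset N"
  shows "shat N \<mu> \<Phi> \<omega>' a b = shat N \<mu> \<Phi> \<omega> (\<tau> a) (\<tau> b)"
proof -
  have "shat N \<mu> \<Phi> \<omega>' a b = (\<Sum>k\<in>Jset N - {a, b}. pw N \<Phi> \<omega> (\<tau> a) (\<tau> k) (\<tau> b) * score \<mu> \<omega> (\<tau> k))"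
    unfolding shat_def using pw_permute assms \<omega>' by (intro sum.cong) (auto simp: score_def)
  also have "\<dots> = shat N \<mu> \<Phi> \<omega> (\<tau> a) (\<tau> b)"
    unfolding shat_def by (rule sum.reindex_bij_betw[OF bij_betw_Diff_pair[OF \<tau> assms]])
  finally show ?thesis .
qed

lemma splus_permute:
  assumes "a \<in> Jset N" "b \<in> Jset N"
  shows "splus N \<mu> \<Phi> \<omega>' a b = splus N \<mu> \<Phi> \<omega> (\<tau> a) (\<tau> b)"
  unfolding splus_def shat_permute[OF assms] using assms \<omega>' by simp

lemma pairwise_wins_permute:
  assumes "j \<in> Jset N"
  shows "pairwise_wins N \<mu> \<Phi> \<omega>' j = pairwise_wins N \<mu> \<Phi> \<omega> (\<tau> j)"
proof -
  let ?wins = "\<lambda>i. splus N \<mu> \<Phi> \<omega> i (\<tau> j) < splus N \<mu> \<Phi> \<omega> (\<tau> j) i"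
  have "pairwise_wins N \<mu> \<Phi> \<omega>' j = card {i\<in>Jset N. ?wins (\<tau> i)}"
    unfolding pairwise_wins_def using assms splus_permute by (intro arg_cong[where f = card] Collect_cong) auto
  also have "\<dots> = card (\<tau> ` {i\<in>Jset N. ?wins (\<tau> i)})"
    by (intro card_image[symmetric] inj_on_subset[OF bij_betw_imp_inj_on[OF \<tau>]]) blast
  also have "\<tau> ` {i\<in>Jset N. ?wins (\<tau> i)} = {i\<in>Jset N. ?wins i}"
  proof
    show "\<tau> ` {i\<in>Jset N. ?wins (\<tau> i)} \<subseteq> {i\<in>Jset N. ?wins i}"
      using bij_betwE[OF \<tau>] by blast
    show "{i\<in>Jset N. ?wins i} \<subseteq> \<tau> ` {i\<in>Jset N. ?wins (\<tau> i)}"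
    proof
      fix i assume i: "i \<in> {i\<in>Jset N. ?wins i}"
      then obtain i' where "i' \<in> Jset N" "i = \<tau> i'"
        using bij_betw_imp_surj_on[OF \<tau>] by (metis (no_types, lifting) imageE mem_Collect_eq)
      with i show "i \<in> \<tau> ` {i\<in>Jset N. ?wins (\<tau> i)}" by blast
    qed
  qed
  finally show ?thesis unfolding pairwise_wins_def .
qed

end

lemma card_pairwise_wins_ge_le:
  assumes "0 \<le> \<alpha>" and "(1 - \<alpha>) * real (N + 1) \<le> real k"
  shows "real (card {j\<in>Jset N. k \<le> pairwise_wins N \<mu> \<Phi> \<omega> j}) \<le> 2 * \<alpha> * real (N + 1)"
proof (cases "{j\<in>Jset N. k \<le> pairwise_wins N \<mu> \<Phi> \<omega> j} = {}")
  case True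
  show ?thesis unfolding True using assms by simp
next
  case False
  have "2 * k + card {j\<in>Jset N. k \<le> pairwise_wins N \<mu> \<Phi> \<omega> j} + 1 \<le> 2 * card (Jset N)"
    using card_many_wins_le[of "Jset N" "\<lambda>j i. splus N \<mu> \<Phi> \<omega> i j < splus N \<mu> \<Phi> \<omega> j i" k] False
    by (simp add: Jset_def pairwise_wins_def)
  then show ?thesis using assms by (simp add: Jset_def algebra_simps)
qed

lemma mem_Cplus_iff_card_less:
  assumes "1 \<le> nat \<lceil>(1 - \<alpha>) * real (N + 1)\<rceil>"
  shows "snd (\<omega> (N + 1)) \<in> Cplus N \<alpha> \<mu> \<Phi> \<omega> \<longleftrightarrow>
    card {i\<in>{1..<N + 1}. shat N \<mu> \<Phi> \<omega> (N + 1) i * splus N \<mu> \<Phi> \<omega> i (N + 1) < score \<mu> \<omega> (N + 1)}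
      < nat \<lceil>(1 - \<alpha>) * real (N + 1)\<rceil>"
proof -
  let ?v = "\<lambda>i. shat N \<mu> \<Phi> \<omega> (N + 1) i * splus N \<mu> \<Phi> \<omega> i (N + 1)"
  have "snd (\<omega> (N + 1)) \<in> Cplus N \<alpha> \<mu> \<Phi> \<omega> \<longleftrightarrow> ereal (score \<mu> \<omega> (N + 1)) \<le> Qval N \<alpha> \<mu> \<Phi> \<omega>"
    by (simp add: Cplus_def score_def ereal_interval_iff_abs_le)
  also have "\<dots> \<longleftrightarrow> length (filter (\<lambda>u. u < score \<mu> \<omega> (N + 1)) (map ?v [1..<N + 1]))
      < nat \<lceil>(1 - \<alpha>) * real (N + 1)\<rceil>"
    unfolding Qval_def using assms by (rule ereal_le_kth_smallest_iff)
  also have "length (filter (\<lambda>u. u < score \<mu> \<omega> (N + 1)) (map ?v [1..<N + 1]))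
      = card ({i. ?v i < score \<mu> \<omega> (N + 1)} \<inter> set [1..<N + 1])"
    by (simp only: filter_map length_map comp_def distinct_length_filter distinct_upt)
  also have "{i. ?v i < score \<mu> \<omega> (N + 1)} \<inter> set [1..<N + 1] = {i\<in>{1..<N + 1}. ?v i < score \<mu> \<omega> (N + 1)}"
    by auto
  finally show ?thesis .
qed

lemma calibration_count_le_pairwise_wins:
  assumes "\<And>i. i \<in> {1..<N + 1} \<Longrightarrow> 0 < shat N \<mu> \<Phi> \<omega> (N + 1) i"
  shows "card {i\<in>{1..<N + 1}. shat N \<mu> \<Phi> \<omega> (N + 1) i * splus N \<mu> \<Phi> \<omega> i (N + 1) < score \<mu> \<omega> (N + 1)}
    \<le> pairwise_wins N \<mu> \<Phi> \<omega> (N + 1)"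
  unfolding pairwise_wins_def
proof (rule card_mono)
  show "finite {i\<in>Jset N. splus N \<mu> \<Phi> \<omega> i (N + 1) < splus N \<mu> \<Phi> \<omega> (N + 1) i}"
    by (simp add: Jset_def)
next
  have "splus N \<mu> \<Phi> \<omega> i (N + 1) < splus N \<mu> \<Phi> \<omega> (N + 1) i"
    if "i \<in> {1..<N + 1}" and "shat N \<mu> \<Phi> \<omega> (N + 1) i * splus N \<mu> \<Phi> \<omega> i (N + 1) < score \<mu> \<omega> (N + 1)" for i
  proof -
    have "splus N \<mu> \<Phi> \<omega> (N + 1) i = score \<mu> \<omega> (N + 1) / shat N \<mu> \<Phi> \<omega> (N + 1) i"
      by (simp add: splus_def score_def)
    with that assms[OF that(1)] show ?thesis by (simp add: pos_less_divide_eq mult.commute)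
  qed
  then show "{i\<in>{1..<N + 1}. shat N \<mu> \<Phi> \<omega> (N + 1) i * splus N \<mu> \<Phi> \<omega> i (N + 1) < score \<mu> \<omega> (N + 1)}
    \<subseteq> {i\<in>Jset N. splus N \<mu> \<Phi> \<omega> i (N + 1) < splus N \<mu> \<Phi> \<omega> (N + 1) i}"
    by (auto simp: Jset_def)
qed

context
  fixes MX :: "'x measure" and \<pi> :: "('x \<times> real) measure"
    and \<mu> :: "'x \<Rightarrow> real"
    and \<Phi> :: "('x \<times> real) multiset \<Rightarrow> 'x \<Rightarrow> 'x \<Rightarrow> real"
    and N :: nat
  assumes sets_\<pi>: "sets \<pi> = sets (MX \<Otimes>\<^sub>M borel)"
    and \<mu>_meas: "\<mu> \<in> borel_measurable MX"
    and \<Phi>_meas: "(\<lambda>(z, x, x'). \<Phi> (image_mset z (mset_set {..<N - 1})) x x')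
                   \<in> borel_measurable (PiM {..<N - 1} (\<lambda>_. \<pi>) \<Otimes>\<^sub>M MX \<Otimes>\<^sub>M MX)"
begin

lemma measurable_fst_component:
  assumes "a \<in> Jset N"
  shows "(\<lambda>\<omega>. fst (\<omega> a)) \<in> measurable (PiM (Jset N) (\<lambda>_. \<pi>)) MX"
proof -
  have "fst \<in> measurable \<pi> MX"
    by (subst measurable_cong_sets[OF sets_\<pi> refl]) (rule measurable_fst)
  with assms show ?thesis by measurable
qed

lemma borel_measurable_score:
  assumes "a \<in> Jset N"
  shows "(\<lambda>\<omega>. score \<mu> \<omega> a) \<in> borel_measurable (PiM (Jset N) (\<lambda>_. \<pi>))"
proof -
  have "snd \<in> borel_measurable \<pi>"
    by (subst measurable_cong_sets[OF sets_\<pi> refl]) (rule measurable_snd)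
  moreover note measurable_compose[OF measurable_fst_component[OF assms] \<mu>_meas]
  ultimately show ?thesis unfolding score_def using assms by measurable
qed

text \<open>The kernel \<open>K_ij\<close> is \<open>\<Phi>\<close> applied to the \<open>N - 1\<close> data points off \<open>{i, j}\<close>; enumerating
  them by \<open>{..<N - 1}\<close> turns it into the measurable map of the hypothesis on \<open>\<Phi>\<close>.\<close>
lemma borel_measurable_Kij:
  assumes "i \<in> Jset N" "j \<in> Jset N" "i \<noteq> j" and "a \<in> Jset N" "l \<in> Jset N"
  shows "(\<lambda>\<omega>. Kij N \<Phi> \<omega> i j (fst (\<omega> a)) (fst (\<omega> l))) \<in> borel_measurable (PiM (Jset N) (\<lambda>_. \<pi>))"
proof -
  define D where "D = Jset N - {i, j}"
  have "finite D" and "card D = N - 1"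
    using assms(1-3) by (auto simp: D_def Jset_def card_Diff_subset)
  then obtain e where e: "bij_betw e {..<N - 1} D"
    using ex_bij_betw_nat_finite[of D] by (auto simp: atLeast0LessThan)
  have enum: "image_mset (\<lambda>n\<in>{..<N - 1}. \<omega> (e n)) (mset_set {..<N - 1}) = image_mset \<omega> (mset_set D)" for \<omega>
  proof -
    have "image_mset (\<lambda>n\<in>{..<N - 1}. \<omega> (e n)) (mset_set {..<N - 1})
        = image_mset \<omega> (image_mset e (mset_set {..<N - 1}))"
      by (auto simp: multiset.map_comp intro: image_mset_cong)
    also have "image_mset e (mset_set {..<N - 1}) = mset_set D"
      using e by (simp add: image_mset_mset_set bij_betw_def)
    finally show ?thesis .
  qed
  have Kij_eq: "Kij N \<Phi> \<omega> i j (fst (\<omega> a)) (fst (\<omega> l))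
      = (\<lambda>(z, x, x'). \<Phi> (image_mset z (mset_set {..<N - 1})) x x')
          ((\<lambda>n\<in>{..<N - 1}. \<omega> (e n)), fst (\<omega> a), fst (\<omega> l))" for \<omega>
    using enum[of \<omega>] by (simp add: Kij_def D_def)
  have inner: "(\<lambda>\<omega>. ((\<lambda>n\<in>{..<N - 1}. \<omega> (e n)), fst (\<omega> a), fst (\<omega> l)))
      \<in> measurable (PiM (Jset N) (\<lambda>_. \<pi>)) (PiM {..<N - 1} (\<lambda>_. \<pi>) \<Otimes>\<^sub>M MX \<Otimes>\<^sub>M MX)"
    using bij_betwE[OF e] assms(4,5) unfolding D_def
    by (intro measurable_Pair measurable_fst_component measurable_restrict measurable_component_singleton) auto
  show ?thesis unfolding Kij_eq by (rule measurable_compose[OF inner \<Phi>_meas])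
qed

lemma borel_measurable_shat:
  assumes "i \<in> Jset N" "j \<in> Jset N" "i \<noteq> j"
  shows "(\<lambda>\<omega>. shat N \<mu> \<Phi> \<omega> i j) \<in> borel_measurable (PiM (Jset N) (\<lambda>_. \<pi>))"
  unfolding shat_def pw_def using assms
  by (intro borel_measurable_sum borel_measurable_times borel_measurable_divide
      borel_measurable_Kij borel_measurable_score) auto

lemma borel_measurable_splus:
  assumes "i \<in> Jset N" "j \<in> Jset N" "i \<noteq> j"
  shows "(\<lambda>\<omega>. splus N \<mu> \<Phi> \<omega> i j) \<in> borel_measurable (PiM (Jset N) (\<lambda>_. \<pi>))"
  using borel_measurable_divide[OF borel_measurable_score borel_measurable_shat] assms
  by (simp add: splus_def score_def)

lemma sets_pairwise_wins_ge:
  assumes "j \<in> Jset N"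
  shows "{\<omega>\<in>space (PiM (Jset N) (\<lambda>_. \<pi>)). k \<le> pairwise_wins N \<mu> \<Phi> \<omega> j} \<in> sets (PiM (Jset N) (\<lambda>_. \<pi>))"
  unfolding pairwise_wins_def
proof (rule sets_Collect_le_card)
  fix i assume "i \<in> Jset N"
  with assms show "{\<omega>\<in>space (PiM (Jset N) (\<lambda>_. \<pi>)). splus N \<mu> \<Phi> \<omega> i j < splus N \<mu> \<Phi> \<omega> j i}
      \<in> sets (PiM (Jset N) (\<lambda>_. \<pi>))"
    by (cases "i = j") (auto intro: borel_measurable_less borel_measurable_splus)
qed (simp add: Jset_def)

lemma sets_calibration_count_ge:
  "{\<omega>\<in>space (PiM (Jset N) (\<lambda>_. \<pi>)). k \<le> card {i\<in>{1..<N + 1}.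
      shat N \<mu> \<Phi> \<omega> (N + 1) i * splus N \<mu> \<Phi> \<omega> i (N + 1) < score \<mu> \<omega> (N + 1)}}
    \<in> sets (PiM (Jset N) (\<lambda>_. \<pi>))"
proof (rule sets_Collect_le_card)
  fix i assume "i \<in> {1..<N + 1}"
  then have "i \<in> Jset N" "N + 1 \<in> Jset N" "i \<noteq> N + 1" by (auto simp: Jset_def)
  then show "{\<omega>\<in>space (PiM (Jset N) (\<lambda>_. \<pi>)).
      shat N \<mu> \<Phi> \<omega> (N + 1) i * splus N \<mu> \<Phi> \<omega> i (N + 1) < score \<mu> \<omega> (N + 1)}
    \<in> sets (PiM (Jset N) (\<lambda>_. \<pi>))"
    by (intro borel_measurable_less borel_measurable_times borel_measurable_shat
        borel_measurable_splus borel_measurable_score) auto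
qed simp

lemma prob_pairwise_wins_test_point_le:
  assumes prob: "prob_space \<pi>" and \<alpha>: "0 \<le> \<alpha>" and k: "(1 - \<alpha>) * real (N + 1) \<le> real k"
  shows "measure (PiM (Jset N) (\<lambda>_. \<pi>)) {\<omega>\<in>space (PiM (Jset N) (\<lambda>_. \<pi>)). k \<le> pairwise_wins N \<mu> \<Phi> \<omega> (N + 1)}
    \<le> 2 * \<alpha>"
proof -
  define P where "P = PiM (Jset N) (\<lambda>_. \<pi>)"
  define S where "S j = {\<omega>\<in>space P. k \<le> pairwise_wins N \<mu> \<Phi> \<omega> j}" for j
  interpret P: prob_space P unfolding P_def using prob by (rule prob_space_PiM)
  have N1: "N + 1 \<in> Jset N" by (simp add: Jset_def)
  have S_sets: "S j \<in> P.events" if "j \<in> Jset N" for j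
    unfolding S_def P_def using that by (rule sets_pairwise_wins_ge)
  have exchangeable: "P.prob (S j) = P.prob (S (N + 1))" if j: "j \<in> Jset N" for j
  proof -
    define \<tau> where "\<tau> = Transposition.transpose j (N + 1)"
    have \<tau>: "bij_betw \<tau> (Jset N) (Jset N)" using j N1 by (simp add: \<tau>_def)
    have "(\<lambda>\<omega>. \<lambda>n\<in>Jset N. \<omega> (\<tau> n)) -` S (N + 1) \<inter> space P = S j"
    proof (intro set_eqI)
      fix \<omega>
      have "pairwise_wins N \<mu> \<Phi> (\<lambda>n\<in>Jset N. \<omega> (\<tau> n)) (N + 1) = pairwise_wins N \<mu> \<Phi> \<omega> j"
        using pairwise_wins_permute[OF \<tau> _ N1, of "\<lambda>n\<in>Jset N. \<omega> (\<tau> n)" \<omega>] by (simp add: \<tau>_def)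
      moreover have "\<omega> \<in> space P \<Longrightarrow> (\<lambda>n\<in>Jset N. \<omega> (\<tau> n)) \<in> space P"
        using bij_betwE[OF \<tau>] by (auto simp: P_def space_PiM)
      ultimately show "\<omega> \<in> (\<lambda>\<omega>. \<lambda>n\<in>Jset N. \<omega> (\<tau> n)) -` S (N + 1) \<inter> space P \<longleftrightarrow> \<omega> \<in> S j"
        by (auto simp: S_def)
    qed
    then show ?thesis
      using measure_PiM_permute_vimage[OF prob \<tau> S_sets[OF N1, unfolded P_def]] by (simp add: P_def)
  qed
  have "real (N + 1) * P.prob (S (N + 1)) = (\<Sum>j\<in>Jset N. P.prob (S j))"
    using exchangeable by (simp add: card_Jset)
  also have "\<dots> \<le> 2 * \<alpha> * real (N + 1)"
  proof (rule P.sum_prob_le_of_card_le)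
    fix \<omega> assume "\<omega> \<in> space P"
    then have "{j\<in>Jset N. \<omega> \<in> S j} = {j\<in>Jset N. k \<le> pairwise_wins N \<mu> \<Phi> \<omega> j}"
      by (simp add: S_def)
    then show "real (card {j\<in>Jset N. \<omega> \<in> S j}) \<le> 2 * \<alpha> * real (N + 1)"
      using card_pairwise_wins_ge_le[OF \<alpha> k] by simp
  qed (use S_sets in \<open>simp_all add: Jset_def\<close>)
  finally show ?thesis by (simp add: S_def P_def mult.commute)
qed

lemma prob_Cplus_ge_one_minus_prob_pairwise_wins:
  assumes prob: "prob_space \<pi>"
    and shat_pos: "AE \<omega> in PiM (Jset N) (\<lambda>_. \<pi>). \<forall>i\<in>{1..<N + 1}. 0 < shat N \<mu> \<Phi> \<omega> (N + 1) i"
    and k: "1 \<le> nat \<lceil>(1 - \<alpha>) * real (N + 1)\<rceil>"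
  shows "1 - measure (PiM (Jset N) (\<lambda>_. \<pi>)) {\<omega>\<in>space (PiM (Jset N) (\<lambda>_. \<pi>)).
      nat \<lceil>(1 - \<alpha>) * real (N + 1)\<rceil> \<le> pairwise_wins N \<mu> \<Phi> \<omega> (N + 1)}
    \<le> measure (PiM (Jset N) (\<lambda>_. \<pi>))
      {\<omega>\<in>space (PiM (Jset N) (\<lambda>_. \<pi>)). snd (\<omega> (N + 1)) \<in> Cplus N \<alpha> \<mu> \<Phi> \<omega>}"
proof -
  define P where "P = PiM (Jset N) (\<lambda>_. \<pi>)"
  define k where "k = nat \<lceil>(1 - \<alpha>) * real (N + 1)\<rceil>"
  define B where "B = {\<omega>\<in>space P. k \<le> card {i\<in>{1..<N + 1}.
    shat N \<mu> \<Phi> \<omega> (N + 1) i * splus N \<mu> \<Phi> \<omega> i (N + 1) < score \<mu> \<omega> (N + 1)}}"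
  define W where "W = {\<omega>\<in>space P. k \<le> pairwise_wins N \<mu> \<Phi> \<omega> (N + 1)}"
  interpret P: prob_space P unfolding P_def using prob by (rule prob_space_PiM)
  have E_eq: "{\<omega>\<in>space P. snd (\<omega> (N + 1)) \<in> Cplus N \<alpha> \<mu> \<Phi> \<omega>} = space P - B"
  proof (intro set_eqI)
    fix \<omega>
    show "\<omega> \<in> {\<omega>\<in>space P. snd (\<omega> (N + 1)) \<in> Cplus N \<alpha> \<mu> \<Phi> \<omega>} \<longleftrightarrow> \<omega> \<in> space P - B"
      using mem_Cplus_iff_card_less[OF k, of \<omega> \<mu> \<Phi>, folded k_def] by (auto simp: B_def)
  qed
  have B_events: "B \<in> P.events"
    unfolding B_def P_def by (rule sets_calibration_count_ge)
  have "AE \<omega> in P. \<omega> \<in> B \<longrightarrow> \<omega> \<in> W"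
    using shat_pos unfolding P_def[symmetric] by (rule eventually_mono)
      (use calibration_count_le_pairwise_wins in \<open>fastforce simp: B_def W_def\<close>)
  then have "P.prob B \<le> P.prob W"
    by (rule P.finite_measure_mono_AE)
      (unfold W_def P_def, rule sets_pairwise_wins_ge, simp add: Jset_def)
  then show ?thesis
    unfolding P_def[symmetric] k_def[symmetric] W_def[symmetric] E_eq P.prob_compl[OF B_events] by simp
qed

end

theorem proposition3:
  fixes MX :: "'x measure" and \<pi> :: "('x \<times> real) measure"
    and \<mu> :: "'x \<Rightarrow> real"
    and \<Phi> :: "('x \<times> real) multiset \<Rightarrow> 'x \<Rightarrow> 'x \<Rightarrow> real"
    and N :: nat and \<alpha> :: real
  assumes prob: "prob_space \<pi>"
    and sets_\<pi>: "sets \<pi> = sets (MX \<Otimes>\<^sub>M borel)"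
    and \<mu>_meas: "\<mu> \<in> borel_measurable MX"
    and \<Phi>_nonneg: "\<And>m x x'. \<Phi> m x x' \<ge> 0"
    and \<Phi>_meas: "(\<lambda>(z, x, x'). \<Phi> (image_mset z (mset_set {..<N - 1})) x x')
                   \<in> borel_measurable (PiM {..<N - 1} (\<lambda>_. \<pi>) \<Otimes>\<^sub>M MX \<Otimes>\<^sub>M MX)"
    and pos: "AE \<omega> in PiM (Jset N) (\<lambda>_. \<pi>).
               \<forall>i\<in>Jset N. \<forall>j\<in>Jset N. i \<noteq> j \<longrightarrow>
                 (\<Sum>l\<in>Jset N - {i, j}. Kij N \<Phi> \<omega> i j (fst (\<omega> i)) (fst (\<omega> l))) > 0
                 \<and> shat N \<mu> \<Phi> \<omega> i j > 0"
    and \<alpha>: "0 \<le> \<alpha>" "\<alpha> \<le> 1"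
  shows "measure (PiM (Jset N) (\<lambda>_. \<pi>))
           {\<omega> \<in> space (PiM (Jset N) (\<lambda>_. \<pi>)). snd (\<omega> (N + 1)) \<in> Cplus N \<alpha> \<mu> \<Phi> \<omega>}
         \<ge> 1 - 2 * \<alpha>"
proof (cases "\<alpha> < 1 / 2")
  case False
  then show ?thesis by (intro order_trans[OF _ measure_nonneg]) simp
next
  case True
  define k where "k = nat \<lceil>(1 - \<alpha>) * real (N + 1)\<rceil>"
  have k: "(1 - \<alpha>) * real (N + 1) \<le> real k" unfolding k_def by (rule real_nat_ceiling_ge)
  moreover have "0 < (1 - \<alpha>) * real (N + 1)" using True by simp
  ultimately have "1 \<le> k" by simp
  have "AE \<omega> in PiM (Jset N) (\<lambda>_. \<pi>). \<forall>i\<in>{1..<N + 1}. 0 < shat N \<mu> \<Phi> \<omega> (N + 1) i"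
    using pos by (rule eventually_mono) (auto simp: Jset_def)
  from prob_Cplus_ge_one_minus_prob_pairwise_wins[OF sets_\<pi> \<mu>_meas \<Phi>_meas prob this \<open>1 \<le> k\<close>[unfolded k_def]]
    and prob_pairwise_wins_test_point_le[OF sets_\<pi> \<mu>_meas \<Phi>_meas prob \<alpha>(1) k]
  show ?thesis by (simp add: k_def)
qed

end
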